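(* Let $q$ be a prime power, let $\mathcal{F}=(\mathcal{F}_1,\ldots,\mathcal{F}_r)$ be a flag on $\mathbb{F}_{q^n}$ whose best friend is the subfield $\mathbb{F}_{q^m}$, and let $\beta\in\mathbb{F}_{q^n}^*\setminus\mathbb{F}_{q^m}^*$. If the code $\mathrm{Orb}_\beta(\mathcal{F})$ is disjoint, then $2mr\le d_f(\mathrm{Orb}_\beta(\mathcal{F}))$.
   Context: A flag on $\mathbb{F}_{q^n}$ is a sequence $(\mathcal{F}_1,\ldots,\mathcal{F}_r)$ of $\mathbb{F}_q$-subspaces with $\{0\}\subsetneq\mathcal{F}_1\subsetneq\cdots\subsetneq\mathcal{F}_r\subsetneq\mathbb{F}_{q^n}$. For $\beta\in\mathbb{F}_{q^n}^*$ of multiplicative order $|\beta|$, $\mathcal{U}\beta=\{u\beta:u\in\mathcal{U}\}$, $\mathcal{F}\beta=(\mathcal{F}_1\beta,\ldots,\mathcal{F}_r\beta)$ and $\mathrm{Orb}_\beta(\mathcal{F})=\{\mathcal{F}\beta^j:0\le j\le|\beta|-1\}$. A subfield $\mathbb{F}_{q^m}$ is a friend of $\mathcal{F}$ if every $\mathcal{F}_i$ is an $\mathbb{F}_{q^m}$-vector space; the best friend is the largest friend. Subspace distance $d_S(\mathcal{U},\mathcal{V})=\dim(\mathcal{U}+\mathcal{V})-\dim(\mathcal{U}\cap\mathcal{V})$; flag distance $d_f(\mathcal{F},\mathcal{F}')=\sum_i d_S(\mathcal{F}_i,\mathcal{F}'_i)$; the minimum distance of a set of flags is the minimum over distinct pairs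 (and $0$ for a single flag). A set $\mathcal{C}$ of flags is disjoint if the sets $\mathcal{C}_i$ of $i$-th subspaces satisfy $|\mathcal{C}_1|=\cdots=|\mathcal{C}_r|=|\mathcal{C}|$. *)

theory Defs
  imports "HOL-Algebra.Algebra" "HOL-Algebra.Embedded_Algebras" "HOL-Algebra.Multiplicative_Group"
begin

(* The field F_{q^n} is a finite field R (HOL-Algebra) with q^n elements.
   Its subfield F_{q^m} (for m dvd n) is the set of roots of X^(q^m) - X. *)
definition subfield_of_order :: "('a, 'b) ring_scheme \<Rightarrow> nat \<Rightarrow> nat \<Rightarrow> 'a set" where
  "subfield_of_order R q m = {x \<in> carrier R. x [^]\<^bsub>R\<^esub> (q ^ m) = x}"

abbreviation base_field :: "('a, 'b) ring_scheme \<Rightarrow> nat \<Rightarrow> 'a set" where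
  "base_field R q \<equiv> subfield_of_order R q 1"

definition is_subspace :: "('a, 'b) ring_scheme \<Rightarrow> 'a set \<Rightarrow> 'a set \<Rightarrow> bool" where
  "is_subspace R K U \<longleftrightarrow> U \<subseteq> carrier R \<and> \<zero>\<^bsub>R\<^esub> \<in> U \<and>
     (\<forall>u\<in>U. \<forall>v\<in>U. u \<oplus>\<^bsub>R\<^esub> v \<in> U) \<and> (\<forall>c\<in>K. \<forall>u\<in>U. c \<otimes>\<^bsub>R\<^esub> u \<in> U)"

definition dim_over :: "('a, 'b) ring_scheme \<Rightarrow> 'a set \<Rightarrow> 'a set \<Rightarrow> nat" where
  "dim_over R K U = (THE d. ring.dimension R d K U)"

definition subspace_dist :: "('a, 'b) ring_scheme \<Rightarrow> nat \<Rightarrow> 'a set \<Rightarrow> 'a set \<Rightarrow> nat" where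
  "subspace_dist R q U V =
     dim_over R (base_field R q) (U <+>\<^bsub>R\<^esub> V) - dim_over R (base_field R q) (U \<inter> V)"

definition is_flag :: "('a, 'b) ring_scheme \<Rightarrow> nat \<Rightarrow> 'a set list \<Rightarrow> bool" where
  "is_flag R q Fs \<longleftrightarrow> Fs \<noteq> [] \<and>
     (\<forall>i < length Fs. is_subspace R (base_field R q) (Fs ! i)) \<and>
     {\<zero>\<^bsub>R\<^esub>} \<subset> Fs ! 0 \<and>
     (\<forall>i. Suc i < length Fs \<longrightarrow> Fs ! i \<subset> Fs ! Suc i) \<and>
     last Fs \<subset> carrier R"

definition flag_dist :: "('a, 'b) ring_scheme \<Rightarrow> nat \<Rightarrow> 'a set list \<Rightarrow> 'a set list \<Rightarrow> nat" where
  "flag_dist R q F G = (\<Sum>i < length F. subspace_dist R q (F ! i) (G ! i))"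

definition min_flag_dist :: "('a, 'b) ring_scheme \<Rightarrow> nat \<Rightarrow> 'a set list set \<Rightarrow> nat" where
  "min_flag_dist R q C =
     (if card C \<le> 1 then 0 else Min {flag_dist R q F G | F G. F \<in> C \<and> G \<in> C \<and> F \<noteq> G})"

definition is_friend :: "('a, 'b) ring_scheme \<Rightarrow> nat \<Rightarrow> nat \<Rightarrow> 'a set list \<Rightarrow> nat \<Rightarrow> bool" where
  "is_friend R q n Fs m \<longleftrightarrow> m > 0 \<and> m dvd n \<and>
     (\<forall>i < length Fs. is_subspace R (subfield_of_order R q m) (Fs ! i))"

definition is_best_friend :: "('a, 'b) ring_scheme \<Rightarrow> nat \<Rightarrow> nat \<Rightarrow> 'a set list \<Rightarrow> nat \<Rightarrow> bool" where
  "is_best_friend R q n Fs m \<longleftrightarrow> is_friend R q n Fs m \<and> (\<forall>m'. is_friend R q n Fs m' \<longrightarrow> m' \<le> m)"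

definition scale_set :: "('a, 'b) ring_scheme \<Rightarrow> 'a set \<Rightarrow> 'a \<Rightarrow> 'a set" where
  "scale_set R U b = (\<lambda>u. u \<otimes>\<^bsub>R\<^esub> b) ` U"

definition scale_flag :: "('a, 'b) ring_scheme \<Rightarrow> 'a set list \<Rightarrow> 'a \<Rightarrow> 'a set list" where
  "scale_flag R Fs b = map (\<lambda>U. scale_set R U b) Fs"

definition orbit_code :: "('a, 'b) ring_scheme \<Rightarrow> 'a \<Rightarrow> 'a set list \<Rightarrow> 'a set list set" where
  "orbit_code R b Fs = {scale_flag R Fs (b [^]\<^bsub>R\<^esub> j) | j. j < group.ord (mult_of R) b}"

definition disjoint_code :: "nat \<Rightarrow> 'a set list set \<Rightarrow> bool" where
  "disjoint_code r C \<longleftrightarrow> (\<forall>i < r. card ((\<lambda>F. F ! i) ` C) = card C)"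

end

theory Submission
  imports Defs
begin

(* The best friend F_{q^m} of a flag is its multiplicative stabilizer, the set of all x with
   x F_i contained in F_i for every i. This stabilizer is a subfield containing F_q; every such
   subfield is the root set F_{q^e} of X^{q^e} - X for some e dividing n (these root sets are
   fields by the Frobenius identity and have q^e elements); and the stabilizer contains every
   friend. Hence beta outside F_{q^m} moves the flag, so the orbit has two distinct flags.

   For two distinct flags of the orbit, disjointness makes every pair of components
   U = F_i beta^a and V = F_i beta^b distinct. Both are F_{q^m}-spaces with the same number of
   elements, so each of the strict inclusions (U inter V) < U < (U + V) of F_{q^m}-spaces
   multiplies the size by at least q^m. Hence |U + V| >= q^{2m} |U inter V|, which is
   d_S(U, V) >= 2m, and summing over the r components gives 2mr. *)

section \<open>Binomial expansion and the Frobenius map\<close>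

lemma (in cring) add_one_pow_binomial:
  assumes x: "x \<in> carrier R"
  shows "(x \<oplus> \<one>) [^] n = (\<Oplus>k\<in>{..n}. add_pow R (n choose k) (x [^] k))"
proof (induction n)
  case 0
  show ?case using x by simp
next
  case (Suc n)
  define T where "T n k = add_pow R (n choose k) (x [^] k)" for n k
  have T_closed: "T n k \<in> carrier R" for n k
    unfolding T_def using x by simp
  have pascal: "T (Suc n) (Suc k) = T n k \<otimes> x \<oplus> T n (Suc k)" for k
    unfolding T_def using x by (simp add: add.nat_pow_mult add_pow_ldistr add_pow_rdistr m_comm)
  have "(\<Oplus>k\<in>{..Suc n}. T (Suc n) k) = (\<Oplus>k\<in>{..n}. T (Suc n) (Suc k)) \<oplus> T (Suc n) 0"
    by (rule finsum_Suc2) (simp add: T_closed)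
  also have "\<dots> = (\<Oplus>k\<in>{..n}. T n k \<otimes> x) \<oplus> ((\<Oplus>k\<in>{..n}. T n (Suc k)) \<oplus> T n 0)"
    unfolding pascal using x by (simp add: T_closed a_assoc T_def)
  also have "(\<Oplus>k\<in>{..n}. T n (Suc k)) \<oplus> T n 0 = (\<Oplus>k\<in>{..Suc n}. T n k)"
    by (rule finsum_Suc2[symmetric]) (simp add: T_closed)
  also have "\<dots> = T n (Suc n) \<oplus> (\<Oplus>k\<in>{..n}. T n k)"
    by (rule finsum_Suc) (simp add: T_closed)
  also have "T n (Suc n) = \<zero>"
    unfolding T_def by (simp add: add_pow_def binomial_eq_0)
  also have "(\<Oplus>k\<in>{..n}. T n k \<otimes> x) = (\<Oplus>k\<in>{..n}. T n k) \<otimes> x"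
    using x by (simp add: T_closed finsum_ldistr)
  finally have "(\<Oplus>k\<in>{..Suc n}. T (Suc n) k) = (\<Oplus>k\<in>{..n}. T n k) \<otimes> (x \<oplus> \<one>)"
    using x by (simp add: T_closed r_distr)
  then show ?case
    using Suc x by (simp add: T_def)
qed

lemma (in cring) add_one_pow_prime:
  assumes p: "Factorial_Ring.prime (p::nat)" and char: "add_pow R p \<one> = \<zero>" and x: "x \<in> carrier R"
  shows "(x \<oplus> \<one>) [^] p = x [^] p \<oplus> \<one>"
proof -
  define T where "T k = add_pow R (p choose k) (x [^] k)" for k
  have T_closed: "T k \<in> carrier R" for k
    unfolding T_def using x by simp
  have T_vanish: "T k = \<zero>" if "0 < k" "k < p" for k
  proof -
    have "p dvd p choose k"
      using dvd_choose_prime[of k p] that p by (simp add: prime_gt_0_nat)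
    then obtain t where t: "p choose k = p * t" ..
    have "add_pow R p (x [^] k) = add_pow R p \<one> \<otimes> x [^] k"
      using x by (simp add: add_pow_ldistr)
    then show ?thesis
      unfolding T_def t using x char by (simp add: add.nat_pow_pow[symmetric])
  qed
  obtain j where j: "p = Suc (Suc j)"
    using prime_ge_2_nat[OF p] by (metis add_2_eq_Suc le_Suc_ex)
  have "(x \<oplus> \<one>) [^] p = (\<Oplus>k\<in>{..p}. T k)"
    unfolding T_def by (rule add_one_pow_binomial[OF x])
  also have "\<dots> = T (Suc (Suc j)) \<oplus> (\<Oplus>k\<in>{..Suc j}. T k)"
    unfolding j by (rule finsum_Suc) (simp add: T_closed)
  also have "(\<Oplus>k\<in>{..Suc j}. T k) = (\<Oplus>k\<in>{..j}. T (Suc k)) \<oplus> T 0"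
    by (rule finsum_Suc2) (simp add: T_closed)
  also have "(\<Oplus>k\<in>{..j}. T (Suc k)) = (\<Oplus>k\<in>{..j}. \<zero>)"
    using T_vanish j by (intro finsum_cong') auto
  finally show ?thesis
    unfolding T_def j using x by (simp add: add_pow_def)
qed

lemma (in field) frobenius_add:
  assumes p: "Factorial_Ring.prime (p::nat)" and char: "add_pow R p \<one> = \<zero>"
    and a: "a \<in> carrier R" and b: "b \<in> carrier R"
  shows "(a \<oplus> b) [^] p = a [^] p \<oplus> b [^] p"
proof (cases "b = \<zero>")
  case True
  then show ?thesis
    using a prime_gt_0_nat[OF p] by (simp add: nat_pow_zero)
next
  case False
  define x where "x = a \<otimes> inv b"
  have x: "x \<in> carrier R" and xb: "x \<otimes> b = a"
    unfolding x_def using a b False by (simp_all add: field_Units m_assoc)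
  then have "a \<oplus> b = (x \<oplus> \<one>) \<otimes> b"
    using b by (simp add: l_distr)
  then have "(a \<oplus> b) [^] p = (x [^] p \<oplus> \<one>) \<otimes> b [^] p"
    using x b add_one_pow_prime[OF p char x] by (simp add: nat_pow_distrib)
  also have "\<dots> = (x \<otimes> b) [^] p \<oplus> b [^] p"
    using x b by (simp add: l_distr nat_pow_distrib)
  also have "\<dots> = a [^] p \<oplus> b [^] p"
    using xb by simp
  finally show ?thesis .
qed

lemma (in field) frobenius_add_pow:
  assumes p: "Factorial_Ring.prime (p::nat)" and char: "add_pow R p \<one> = \<zero>"
    and a: "a \<in> carrier R" and b: "b \<in> carrier R"
  shows "(a \<oplus> b) [^] (p ^ k) = a [^] (p ^ k) \<oplus> b [^] (p ^ k)"
proof (induction k)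
  case (Suc k)
  have "(a \<oplus> b) [^] (p ^ Suc k) = ((a \<oplus> b) [^] (p ^ k)) [^] p"
    using a b by (simp add: nat_pow_pow mult.commute)
  also have "\<dots> = (a [^] (p ^ k)) [^] p \<oplus> (b [^] (p ^ k)) [^] p"
    using Suc a b frobenius_add[OF p char] by simp
  finally show ?case
    using a b by (simp add: nat_pow_pow mult.commute)
qed (use a b in simp)

section \<open>Finite fields\<close>

lemma (in domain) nat_pow_eq_zero_iff:
  assumes "x \<in> carrier R"
  shows "x [^] (n::nat) = \<zero> \<longleftrightarrow> x = \<zero> \<and> n \<noteq> 0"
proof (induction n)
  case (Suc n)
  then show ?case
    using assms integral_iff[of "x [^] n" x] by auto
qed simp

locale finite_field = field +
  assumes finite_carrier [simp, intro]: "finite (carrier R)"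

lemma (in ring) card_subfield_ge_2:
  assumes "finite (carrier R)" and "subfield K R"
  shows "2 \<le> card K"
proof -
  have "{\<zero>, \<one>} \<subseteq> K" "\<one> \<noteq> \<zero>"
    using subringE(2,3)[OF subfieldE(1)[OF assms(2)]] subfieldE(6)[OF assms(2)] by auto
  moreover have "finite K"
    using assms finite_subset subfieldE(3) by blast
  ultimately show ?thesis
    using card_mono[of K "{\<zero>, \<one>}"] by simp
qed

lemma (in finite_field) card_carrier_ge_2: "2 \<le> card (carrier R)"
  using card_subfield_ge_2[OF finite_carrier carrier_is_subfield] .

lemma (in finite_field) add_pow_prime_one:
  assumes p: "Factorial_Ring.prime (p::nat)" and card: "card (carrier R) = p ^ e"
  shows "add_pow R p \<one> = \<zero>"
proof -
  have pow: "add_pow R (p ^ k) \<one> = (add_pow R p \<one>) [^] k" for k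
  proof (induction k)
    case (Suc k)
    have "add_pow R (p ^ Suc k) \<one> = add_pow R p (add_pow R (p ^ k) \<one>)"
      by (simp add: add.nat_pow_pow mult.commute)
    also have "\<dots> = add_pow R (p ^ k) \<one> \<otimes> add_pow R p \<one>"
      using add_pow_rdistr[of "add_pow R (p ^ k) \<one>" \<one> p] by simp
    finally show ?case
      using Suc by simp
  qed (simp add: add_pow_def)
  have "add_pow R (order (add_monoid R)) \<one> = \<zero>"
    by (rule add.pow_order_eq_1) simp
  then have "(add_pow R p \<one>) [^] e = \<zero>"
    using card pow by (simp add: order_def)
  then show ?thesis
    using nat_pow_eq_zero_iff[of "add_pow R p \<one>" e] by simp
qed

lemma (in field) pow_eq_self_iff:
  assumes "x \<in> carrier R" "x \<noteq> \<zero>" "(Q::nat) > 0"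
  shows "x [^] Q = x \<longleftrightarrow> x [^] (Q - 1) = \<one>"
proof -
  have "x [^] Q = x [^] (Q - 1) \<otimes> x"
    using nat_pow_Suc[of x "Q - 1"] assms(3) by simp
  then show ?thesis
    using assms m_rcancel[of x "x [^] (Q - 1)" \<one>] by auto
qed

lemma (in finite_field) exists_element_of_order:
  assumes d: "d dvd card (carrier R) - 1"
  obtains b where "b \<in> carrier (Multiplicative_Group.mult_of R)"
    and "group.ord (Multiplicative_Group.mult_of R) b = d"
proof -
  interpret G: group "Multiplicative_Group.mult_of R"
    rewrites "([^]\<^bsub>Multiplicative_Group.mult_of R\<^esub>) = (([^]) :: _ \<Rightarrow> nat \<Rightarrow> _)"
    by (rule field_mult_group) (simp add: fun_eq_iff nat_pow_def)
  define N where "N = card (carrier R) - 1"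
  obtain t where t: "N = d * t"
    using d unfolding N_def ..
  have "N > 0"
    unfolding N_def using card_carrier_ge_2 by simp
  then have "t \<noteq> 0" "N div t = d"
    using t by auto
  obtain a where a: "a \<in> carrier (Multiplicative_Group.mult_of R)"
    and gen: "carrier (Multiplicative_Group.mult_of R) = {a [^] i | i. i \<in> (UNIV :: nat set)}"
    using finite_field_mult_group_has_gen[OF finite_carrier] by blast
  have "G.ord a = N"
    using G.generate_pow_card[OF a] G.generate_pow_on_finite_carrier[OF _ a] gen
      order_mult_of[OF finite_carrier]
    by (simp add: order_def N_def)
  then have "G.ord (a [^] t) = d"
    using G.ord_pow[OF a, of t] t \<open>t \<noteq> 0\<close> \<open>N div t = d\<close> by simp
  then show ?thesis
    using that a by blast
qed

lemma (in finite_field) card_roots_of_unity: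
  assumes d: "d dvd card (carrier R) - 1"
  shows "card {x \<in> carrier R. x [^] d = \<one>} = d"
proof -
  interpret G: group "Multiplicative_Group.mult_of R"
    rewrites "([^]\<^bsub>Multiplicative_Group.mult_of R\<^esub>) = (([^]) :: _ \<Rightarrow> nat \<Rightarrow> _)"
      and "\<one>\<^bsub>Multiplicative_Group.mult_of R\<^esub> = \<one>"
    by (rule field_mult_group) (simp_all add: fun_eq_iff nat_pow_def)
  obtain b where b: "b \<in> carrier (Multiplicative_Group.mult_of R)" and ord_b: "G.ord b = d"
    using exists_element_of_order[OF d] by blast
  have "d > 0"
    using G.ord_ge_1[OF finite_mult_of[OF finite_carrier] b] ord_b by simp
  have powers: "(\<lambda>i. b [^] i) ` {1..d} \<subseteq> {x \<in> carrier R. x [^] d = \<one>}"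
  proof
    fix y assume "y \<in> (\<lambda>i. b [^] i) ` {1..d}"
    then obtain i :: nat where y: "y = b [^] i"
      by blast
    have "(b [^] i) [^] d = (b [^] d) [^] i"
      using b by (simp add: G.nat_pow_pow mult.commute)
    then show "y \<in> {x \<in> carrier R. x [^] d = \<one>}"
      using y b G.pow_ord_eq_1[OF b] unfolding ord_b by simp
  qed
  have "card ((\<lambda>i. b [^] i) ` {1..d}) = d"
    using G.ord_inj'[OF b] ord_b by (simp add: card_image)
  then have "d \<le> card {x \<in> carrier R. x [^] d = \<one>}"
    using card_mono[OF _ powers] by simp
  moreover have "card {x \<in> carrier R. x [^] d = \<one>} \<le> d"
    using num_roots_le_deg[OF finite_carrier] \<open>d > 0\<close> by simp
  ultimately show ?thesis
    by linarith
qed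

lemma (in field) pow_eq_self_set:
  assumes "1 < (Q::nat)"
  shows "{x \<in> carrier R. x [^] Q = x} = insert \<zero> {x \<in> carrier R. x [^] (Q - 1) = \<one>}"
proof -
  have "x [^] Q = x \<longleftrightarrow> x = \<zero> \<or> x [^] (Q - 1) = \<one>" if "x \<in> carrier R" for x
    using pow_eq_self_iff[OF that] assms by (cases "x = \<zero>") (auto simp: nat_pow_zero)
  then show ?thesis
    by auto
qed

lemma (in finite_field) card_pow_eq_self:
  assumes "(Q - 1) dvd card (carrier R) - 1"
  shows "card {x \<in> carrier R. x [^] Q = x} = Q"
proof -
  have "1 < Q"
    using assms card_carrier_ge_2 by (cases "Q \<le> 1") auto
  then have "\<zero> \<notin> {x \<in> carrier R. x [^] (Q - 1) = \<one>}"
    by (simp add: nat_pow_zero)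
  then show ?thesis
    using pow_eq_self_set[OF \<open>1 < Q\<close>] card_roots_of_unity[OF assms] \<open>1 < Q\<close> by simp
qed

lemma (in finite_field) card_pow_eq_self_le:
  assumes "1 < (Q::nat)"
  shows "card {x \<in> carrier R. x [^] Q = x} \<le> Q"
proof -
  have "card {x \<in> carrier R. x [^] (Q - 1) = \<one>} \<le> Q - 1"
    using num_roots_le_deg[OF finite_carrier, of "Q - 1"] assms by simp
  then show ?thesis
    unfolding pow_eq_self_set[OF assms] using assms card_insert_le_m1[of Q] by simp
qed

lemma (in finite_field) pow_card_eq_self:
  assumes x: "x \<in> carrier R"
  shows "x [^] card (carrier R) = x"
proof (cases "x = \<zero>")
  case True
  have "card (carrier R) \<noteq> 0"
    using card_carrier_ge_2 by linarith
  then show ?thesis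
    using True by (simp add: nat_pow_zero)
next
  case False
  have "x [^] (card (carrier R) - 1) = \<one>"
    using group.pow_order_eq_1[OF field_mult_group, of x] x False order_mult_of[OF finite_carrier]
    by (simp add: order_def Multiplicative_Group.nat_pow_mult_of)
  then show ?thesis
    using pow_eq_self_iff[OF x False] card_carrier_ge_2 by simp
qed

lemma (in finite_field) subfield_eq_pow_card_eq_self:
  assumes S: "subfield S R"
  shows "S = {x \<in> carrier R. x [^] card S = x}"
proof -
  have S_carrier: "S \<subseteq> carrier R"
    using subfieldE(3)[OF S] .
  interpret S: finite_field "R\<lparr>carrier := S\<rparr>"
  proof (intro finite_field.intro finite_field_axioms.intro)
    show "field (R\<lparr>carrier := S\<rparr>)"
      using subfield_iff(2)[OF S] .
    show "finite (carrier (R\<lparr>carrier := S\<rparr>))"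
      using S_carrier finite_subset by auto
  qed
  have pow: "x [^]\<^bsub>R\<lparr>carrier := S\<rparr>\<^esub> n = x [^] (n::nat)" for x n
    by (simp add: nat_pow_def)
  have sub: "S \<subseteq> {x \<in> carrier R. x [^] card S = x}"
    using S.pow_card_eq_self S_carrier by (auto simp: pow)
  moreover have "card {x \<in> carrier R. x [^] card S = x} \<le> card S"
    using card_pow_eq_self_le S.card_carrier_ge_2 by simp
  ultimately show ?thesis
    using card_seteq[OF _ sub] by simp
qed

lemma (in field) subfield_pow_prime_power_eq_self:
  assumes p: "Factorial_Ring.prime (p::nat)" and char: "add_pow R p \<one> = \<zero>"
  shows "subfield {x \<in> carrier R. x [^] (p ^ k) = x} R" (is "subfield ?F R")
proof (rule subfieldI'[OF subringI])
  show "?F \<subseteq> carrier R" "\<one> \<in> ?F"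
    by auto
next
  fix h1 h2 assume "h1 \<in> ?F" "h2 \<in> ?F"
  then show "h1 \<oplus> h2 \<in> ?F" "h1 \<otimes> h2 \<in> ?F"
    using frobenius_add_pow[OF p char] by (auto simp: nat_pow_distrib)
next
  fix h assume h: "h \<in> ?F"
  have "h \<oplus> (\<ominus> h) [^] (p ^ k) = (h \<oplus> \<ominus> h) [^] (p ^ k)"
    using h frobenius_add_pow[OF p char, of h "\<ominus> h"] by simp
  also have "\<dots> = \<zero>"
    using h p by (simp add: r_neg nat_pow_zero prime_gt_0_nat)
  finally have "(\<ominus> h) [^] (p ^ k) \<oplus> h = \<zero>"
    using h by (simp add: a_comm)
  then have "\<ominus> h = (\<ominus> h) [^] (p ^ k)"
    using h by (intro minus_equality) auto
  then show "\<ominus> h \<in> ?F"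
    using h by simp
next
  fix h assume h: "h \<in> ?F - {\<zero>}"
  then have h_unit: "h \<in> Units R"
    by (simp add: field_Units)
  have "(h \<otimes> inv h) [^] (p ^ k) = h [^] (p ^ k) \<otimes> (inv h) [^] (p ^ k)"
    using h_unit by (intro nat_pow_distrib) auto
  then have "h \<otimes> (inv h) [^] (p ^ k) = \<one>"
    using h h_unit by simp
  then have "inv h = (inv h) [^] (p ^ k)"
    using h by (intro comm_inv_char) (auto simp: field_Units)
  then show "inv h \<in> ?F"
    using h by (simp add: field_Units)
qed

section \<open>Counting the elements of subspaces\<close>

lemma (in ring) is_subspace_iff_subalgebra:
  assumes K: "subfield K R"
  shows "is_subspace R K U \<longleftrightarrow> subalgebra K U R"
proof
  assume U: "is_subspace R K U"
  have U_carrier: "U \<subseteq> carrier R"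
    using U unfolding is_subspace_def by blast
  have "\<ominus> u \<in> U" if "u \<in> U" for u
  proof -
    have "\<ominus> \<one> \<otimes> u \<in> U"
      using U that subringE(3,5)[OF subfieldE(1)[OF K]] unfolding is_subspace_def by blast
    then show ?thesis
      using that U_carrier by (simp add: l_minus subsetD)
  qed
  then have "subgroup U (add_monoid R)"
    using U unfolding is_subspace_def by (intro add.subgroupI) auto
  then show "subalgebra K U R"
    using U unfolding is_subspace_def by (simp add: subalgebra_def subalgebra_axioms_def)
next
  assume U: "subalgebra K U R"
  then have sub: "subgroup U (add_monoid R)"
    by (simp add: subalgebra_def)
  have "\<zero> \<in> U"
    using subgroup.one_closed[OF sub] by simp
  moreover have "u \<oplus> v \<in> U" if "u \<in> U" "v \<in> U" for u v
    using subgroup.m_closed[OF sub that] by simp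
  ultimately show "is_subspace R K U"
    using subalgebra.smult_closed[OF U] subalgebra_in_carrier[OF U] unfolding is_subspace_def by blast
qed

lemma subalgebra_restrict_scalars:
  assumes "subalgebra L U R" and "K \<subseteq> L"
  shows "subalgebra K U R"
  using assms unfolding subalgebra_def subalgebra_axioms_def by blast

lemma (in ring) dim_over_eq_dim: "dim_over R K U = dim K U"
  unfolding dim_over_def dim_def ..

lemma (in ring) card_Span_independent:
  assumes K: "subfield K R" and fin: "finite K" and Us: "independent K Us"
  shows "card (Span K Us) = card K ^ length Us"
proof -
  define coeffs where "coeffs = {Ks. set Ks \<subseteq> K \<and> length Ks = length Us}"
  have Span: "Span K Us = (\<lambda>Ks. combine Ks Us) ` coeffs"
    unfolding coeffs_def Span_eq_combine_set_length_version[OF K independent_in_carrier[OF Us]]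
    by blast
  have "inj_on (\<lambda>Ks. combine Ks Us) coeffs"
  proof (rule inj_onI)
    fix Ks Ks' assume Ks: "Ks \<in> coeffs" "Ks' \<in> coeffs" "combine Ks Us = combine Ks' Us"
    have "combine Ks Us \<in> Span K Us"
      using Span Ks(1) by blast
    then show "Ks = Ks'"
      using unique_decomposition[OF K Us] Ks unfolding coeffs_def by blast
  qed
  then have "card (Span K Us) = card coeffs"
    unfolding Span by (rule card_image)
  also have "\<dots> = card K ^ length Us"
    unfolding coeffs_def by (rule card_lists_length_eq[OF fin])
  finally show ?thesis .
qed

lemma (in ring) card_subalgebra:
  assumes fin: "finite (carrier R)" and K: "subfield K R" and V: "subalgebra K V R"
  shows "finite_dimension K V" and "card V = card K ^ dim K V"
proof -
  obtain Vs where Vs: "set Vs = V"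
    using finite_list finite_subset[OF subalgebra_in_carrier[OF V] fin] by blast
  then have Vs_carrier: "set Vs \<subseteq> carrier R"
    using subalgebra_in_carrier[OF V] by simp
  have "Span K Vs = V"
    using subalgebra_Span_incl[OF K V] Span_base_incl[OF K Vs_carrier] Vs by blast
  then obtain Us where Us: "independent K Us" "Span K Us = V"
    using filter_base[OF K Vs_carrier] by metis
  then have dim: "dimension (length Us) K V"
    using dimensionI[OF K] by blast
  then show "finite_dimension K V"
    by (rule finite_dimensionI)
  have "dim K V = length Us"
    using dimI[OF K dim] by (simp add: over_def)
  moreover have "finite K"
    using fin finite_subset subfieldE(3)[OF K] by blast
  ultimately show "card V = card K ^ dim K V"
    using card_Span_independent[OF K _ Us(1)] Us(2) by simp
qed

lemma (in ring) subalgebra_set_add: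
  assumes fin: "finite (carrier R)" and K: "subfield K R"
    and U: "subalgebra K U R" and V: "subalgebra K V R"
  shows "subalgebra K (U <+>\<^bsub>R\<^esub> V) R"
  using finite_dimension_imp_subalgebra[OF K]
    sum_space_dim(1)[OF K card_subalgebra(1)[OF fin K U] card_subalgebra(1)[OF fin K V]] .

lemma (in ring) card_mult_le_card_of_psubset:
  assumes fin: "finite (carrier R)" and K: "subfield K R"
    and W: "subalgebra K W R" and V: "subalgebra K V R" and WV: "W \<subset> V"
  shows "card K * card W \<le> card V"
proof -
  have K2: "2 \<le> card K"
    by (rule card_subfield_ge_2[OF fin K])
  have "card W < card V"
    using WV finite_subset[OF subalgebra_in_carrier[OF V] fin] by (rule psubset_card_mono[rotated])
  then have "card K ^ dim K W < card K ^ dim K V"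
    unfolding card_subalgebra(2)[OF fin K W] card_subalgebra(2)[OF fin K V] .
  then have "Suc (dim K W) \<le> dim K V"
    using power_less_imp_less_exp K2 by (simp add: Suc_le_eq)
  then have "card K ^ Suc (dim K W) \<le> card K ^ dim K V"
    using K2 by (intro power_increasing) auto
  then show ?thesis
    unfolding card_subalgebra(2)[OF fin K W] card_subalgebra(2)[OF fin K V] by simp
qed

lemma (in ring) dim_inter_plus_le_dim_set_add:
  assumes fin: "finite (carrier R)" and K: "subfield K R" and L: "subfield L R"
    and KL: "K \<subseteq> L" and card_L: "card L = card K ^ m"
    and U: "subalgebra L U R" and V: "subalgebra L V R"
    and UV: "U \<noteq> V" and card_UV: "card U = card V"
  shows "dim K (U \<inter> V) + 2 * m \<le> dim K (U <+>\<^bsub>R\<^esub> V)"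
proof -
  define I where "I = U \<inter> V"
  define P where "P = U <+>\<^bsub>R\<^esub> V"
  have I: "subalgebra L I R" and P: "subalgebra L P R"
    unfolding I_def P_def using subalgebra_inter[OF U V] subalgebra_set_add[OF fin L U V] .
  have fin_UV: "finite U" "finite V"
    using fin finite_subset subalgebra_in_carrier U V by metis+
  have "U \<subseteq> P" "V \<subseteq> P"
    using subalgebra_in_carrier[OF U] subalgebra_in_carrier[OF V]
      subgroup.one_closed[OF subalgebra.axioms(1)[OF U]] subgroup.one_closed[OF subalgebra.axioms(1)[OF V]]
    unfolding P_def set_add_def' by (force intro: r_zero[symmetric] l_zero[symmetric])+
  have "I \<subset> U"
    using card_subset_eq[OF fin_UV(2) _ card_UV] UV unfolding I_def by blast
  moreover have "U \<subset> P"
    using card_subset_eq[OF fin_UV(1) _ card_UV[symmetric]] UV \<open>U \<subseteq> P\<close> \<open>V \<subseteq> P\<close> by blast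
  ultimately have "card L * (card L * card I) \<le> card P"
    using card_mult_le_card_of_psubset[OF fin L] I U P
    by (meson le_trans mult_le_mono2)
  moreover have "card K ^ (dim K I + 2 * m) = card L * (card L * card I)"
    using subalgebra_restrict_scalars[OF I KL] power_add[of "card K" m m]
    by (simp add: card_subalgebra(2)[OF fin K] card_L power_add mult_2)
  ultimately have "card K ^ (dim K I + 2 * m) \<le> card K ^ dim K P"
    using subalgebra_restrict_scalars[OF P KL] by (simp add: card_subalgebra(2)[OF fin K])
  then show ?thesis
    unfolding I_def P_def using card_subfield_ge_2[OF fin K] by (simp add: power_le_imp_le_exp)
qed

section \<open>Scaled subspaces and multiplicative stabilizers\<close>

lemma (in cring) is_subspace_scale_set:
  assumes K: "K \<subseteq> carrier R" and U: "is_subspace R K U" and c: "c \<in> carrier R"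
  shows "is_subspace R K (scale_set R U c)"
proof -
  have U_carrier: "U \<subseteq> carrier R"
    using U unfolding is_subspace_def by blast
  have "\<zero> \<otimes> c \<in> scale_set R U c"
    using U unfolding is_subspace_def scale_set_def by blast
  moreover have "u \<otimes> c \<oplus> v \<otimes> c \<in> scale_set R U c" if "u \<in> U" "v \<in> U" for u v
  proof -
    have "u \<otimes> c \<oplus> v \<otimes> c = (u \<oplus> v) \<otimes> c"
      using that U_carrier c by (simp add: l_distr subsetD)
    then show ?thesis
      using U that unfolding is_subspace_def scale_set_def by auto
  qed
  moreover have "k \<otimes> (u \<otimes> c) \<in> scale_set R U c" if "k \<in> K" "u \<in> U" for k u
  proof -
    have "k \<otimes> (u \<otimes> c) = (k \<otimes> u) \<otimes> c"
      using that U_carrier K c by (simp add: m_assoc subsetD)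
    then show ?thesis
      using U that unfolding is_subspace_def scale_set_def by auto
  qed
  ultimately show ?thesis
    using U_carrier c unfolding is_subspace_def scale_set_def by auto
qed

lemma (in domain) card_scale_set:
  assumes "U \<subseteq> carrier R" "c \<in> carrier R" "c \<noteq> \<zero>"
  shows "card (scale_set R U c) = card U"
  unfolding scale_set_def
  by (rule card_image, rule inj_onI) (use assms m_rcancel in blast)

lemma (in ring) scale_set_one:
  assumes "U \<subseteq> carrier R"
  shows "scale_set R U \<one> = U"
proof -
  have "u \<otimes> \<one> = u" if "u \<in> U" for u
    using assms that by auto
  then show ?thesis
    unfolding scale_set_def using image_cong[of U U "\<lambda>u. u \<otimes> \<one>" "\<lambda>u. u"] by simp
qed

definition mult_stabilizer :: "('a, 'b) ring_scheme \<Rightarrow> 'a set set \<Rightarrow> 'a set" where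
  "mult_stabilizer R \<U> = {x \<in> carrier R. \<forall>U\<in>\<U>. \<forall>u\<in>U. x \<otimes>\<^bsub>R\<^esub> u \<in> U}"

lemma (in field) subfield_mult_stabilizer:
  assumes sub: "\<And>U. U \<in> \<U> \<Longrightarrow> subgroup U (add_monoid R)" and fin: "\<And>U. U \<in> \<U> \<Longrightarrow> finite U"
  shows "subfield (mult_stabilizer R \<U>) R"
proof (rule subfieldI'[OF subringI])
  have U_carrier: "U \<subseteq> carrier R" if "U \<in> \<U>" for U
    using subgroup.subset[OF sub[OF that]] by simp
  have "\<one> \<otimes> u = u" if "U \<in> \<U>" "u \<in> U" for U u
    using U_carrier[OF that(1)] that(2) by auto
  then show "mult_stabilizer R \<U> \<subseteq> carrier R" "\<one> \<in> mult_stabilizer R \<U>"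
    unfolding mult_stabilizer_def by auto
  fix a b assume a: "a \<in> mult_stabilizer R \<U>" and b: "b \<in> mult_stabilizer R \<U>"
  have "(a \<oplus> b) \<otimes> u = a \<otimes> u \<oplus> b \<otimes> u" "(a \<otimes> b) \<otimes> u = a \<otimes> (b \<otimes> u)" "\<ominus> a \<otimes> u = \<ominus> (a \<otimes> u)"
    if "U \<in> \<U>" "u \<in> U" for U u
    using a b U_carrier[OF that(1)] that(2) unfolding mult_stabilizer_def
    by (auto simp: l_distr m_assoc l_minus)
  then show "a \<oplus> b \<in> mult_stabilizer R \<U>" "a \<otimes> b \<in> mult_stabilizer R \<U>" "\<ominus> a \<in> mult_stabilizer R \<U>"
    using a b add.subgroupE(3,4)[OF sub] unfolding mult_stabilizer_def by auto
next
  fix a assume a: "a \<in> mult_stabilizer R \<U> - {\<zero>}"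
  then have a_unit: "a \<in> Units R"
    unfolding mult_stabilizer_def by (simp add: field_Units)
  have "inv a \<otimes> u \<in> U" if U: "U \<in> \<U>" and u: "u \<in> U" for U u
  proof -
    have U_carrier: "U \<subseteq> carrier R"
      using subgroup.subset[OF sub[OF U]] by simp
    \<comment> \<open>multiplication by \<open>a\<close> is an injective self-map of the finite set \<open>U\<close>, hence onto\<close>
    have "(\<lambda>w. a \<otimes> w) ` U = U"
      using a U U_carrier m_lcancel[of a] a_unit fin[OF U] unfolding mult_stabilizer_def
      by (intro endo_inj_surj) (auto simp: inj_on_def subset_iff)
    then obtain w where "w \<in> U" "u = a \<otimes> w"
      using u by blast
    moreover have "w \<in> carrier R"
      using U_carrier \<open>w \<in> U\<close> by blast
    then have "inv a \<otimes> (a \<otimes> w) = w"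
      using a_unit by (metis Units_closed Units_inv_closed Units_l_inv l_one m_assoc)
    ultimately show ?thesis
      by simp
  qed
  then show "inv a \<in> mult_stabilizer R \<U>"
    using a_unit unfolding mult_stabilizer_def by auto
qed

lemma (in cring) mult_stabilizer_if_scale_flag_eq:
  assumes "scale_flag R Fs c = Fs" and c: "c \<in> carrier R" and "\<forall>U\<in>set Fs. U \<subseteq> carrier R"
  shows "c \<in> mult_stabilizer R (set Fs)"
proof -
  have "c \<otimes> u \<in> U" if "U \<in> set Fs" "u \<in> U" for U u
  proof -
    have "scale_set R U c = U"
      using assms(1) that(1) map_eq_conv[of _ Fs "\<lambda>U. U"] unfolding scale_flag_def by auto
    then show ?thesis
      using that assms(3) c unfolding scale_set_def by (force simp: m_comm)
  qed
  then show ?thesis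
    unfolding mult_stabilizer_def using c by blast
qed

section \<open>Orbit codes\<close>

lemma min_flag_dist_ge:
  assumes C: "finite C" and F0: "F0 \<in> C" and G0: "G0 \<in> C" "F0 \<noteq> G0"
    and bound: "\<And>F G. F \<in> C \<Longrightarrow> G \<in> C \<Longrightarrow> F \<noteq> G \<Longrightarrow> d \<le> flag_dist R q F G"
  shows "d \<le> min_flag_dist R q C"
proof -
  define D where "D = {flag_dist R q F G | F G. F \<in> C \<and> G \<in> C \<and> F \<noteq> G}"
  have "card {F0, G0} \<le> card C"
    using C F0 G0 by (intro card_mono) auto
  then have "\<not> card C \<le> 1"
    using G0(2) by simp
  moreover have "finite D"
    unfolding D_def using C by (auto intro: finite_subset[of _ "(\<lambda>(F, G). flag_dist R q F G) ` (C \<times> C)"])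
  moreover have "D \<noteq> {}"
    unfolding D_def using F0 G0 by blast
  ultimately show ?thesis
    unfolding min_flag_dist_def D_def[symmetric] using bound by (auto simp: D_def)
qed

(* Defs uses the copy of mult_of from Ring_Divisibility; the group facts of the library are
   stated for the identical copy from Multiplicative_Group. *)
lemma (in field) group_mult_of: "group (mult_of R)"
  using field_mult_group unfolding Ring_Divisibility.mult_of_def Multiplicative_Group.mult_of_def .

lemma (in field) orbit_code_eq_image:
  "orbit_code R b Fs = (\<lambda>j. scale_flag R Fs (b [^] j)) ` {..<group.ord (mult_of R) b}"
  unfolding orbit_code_def by auto

lemma (in field) finite_orbit_code: "finite (orbit_code R b Fs)"
  unfolding orbit_code_eq_image by simp

lemma (in finite_field) scale_flag_mem_orbit_code:
  assumes b: "b \<in> carrier R" "b \<noteq> \<zero>" "b \<noteq> \<one>" and Fs: "\<forall>U\<in>set Fs. U \<subseteq> carrier R"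
  shows "Fs \<in> orbit_code R b Fs" and "scale_flag R Fs b \<in> orbit_code R b Fs"
proof -
  have b_mult: "b \<in> carrier (mult_of R)"
    using b by simp
  have "group.ord (mult_of R) b \<noteq> 1"
    using group.ord_eq_1[OF group_mult_of b_mult] b by simp
  moreover have "1 \<le> group.ord (mult_of R) b"
    using group.ord_ge_1[OF group_mult_of _ b_mult] by simp
  ultimately have ord: "0 < group.ord (mult_of R) b" "1 < group.ord (mult_of R) b"
    by auto
  have "scale_flag R Fs (b [^] (0::nat)) = Fs"
    unfolding scale_flag_def using Fs scale_set_one by (simp add: map_idI)
  then show "Fs \<in> orbit_code R b Fs"
    unfolding orbit_code_eq_image using ord(1) by (intro rev_image_eqI[of 0]) simp_all
  show "scale_flag R Fs b \<in> orbit_code R b Fs"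
    unfolding orbit_code_def using ord(2) b by (auto intro: exI[of _ 1])
qed

section \<open>Subfields of a field with \<open>q ^ n\<close> elements\<close>

lemma diff_one_dvd_power_diff_one: "((x::nat) - 1) dvd (x ^ t - 1)"
proof (cases "x = 0")
  case True
  then show ?thesis
    by (cases t) auto
next
  case False
  then have "int (x - 1) dvd int (x ^ t - 1)"
    by (simp add: of_nat_diff power_diff_1_eq)
  then show ?thesis
    by (simp only: of_nat_dvd_iff)
qed

locale finite_field_of_order = finite_field +
  fixes q n :: nat
  assumes prime_power: "\<exists>p k. Factorial_Ring.prime p \<and> k > 0 \<and> q = p ^ k"
    and card_carrier: "card (carrier R) = q ^ n"
begin

lemma two_le_q: "2 \<le> q"
proof -
  obtain p k where p: "Factorial_Ring.prime p" and k: "k > 0" and q: "q = p ^ k"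
    using prime_power by blast
  have "p ^ 1 \<le> p ^ k"
    using k prime_gt_0_nat[OF p] by (intro power_increasing) auto
  then show ?thesis
    using prime_ge_2_nat[OF p] q by simp
qed

lemma subfield_subfield_of_order: "subfield (subfield_of_order R q j) R"
proof -
  obtain p k where p: "Factorial_Ring.prime p" and q: "q = p ^ k"
    using prime_power by blast
  have "add_pow R p \<one> = \<zero>"
    using add_pow_prime_one[OF p] card_carrier q by (simp add: power_mult[symmetric])
  then show ?thesis
    using subfield_pow_prime_power_eq_self[OF p, of "k * j"]
    unfolding subfield_of_order_def q by (simp add: power_mult)
qed

lemma card_subfield_of_order:
  assumes "j dvd n"
  shows "card (subfield_of_order R q j) = q ^ j"
proof -
  obtain t where "n = j * t"
    using assms ..
  then have "(q ^ j - 1) dvd card (carrier R) - 1"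
    using card_carrier diff_one_dvd_power_diff_one[of "q ^ j" t] by (simp add: power_mult)
  then show ?thesis
    unfolding subfield_of_order_def by (rule card_pow_eq_self)
qed

lemma base_field_subset_subfield_of_order: "base_field R q \<subseteq> subfield_of_order R q j"
proof
  fix x assume x: "x \<in> base_field R q"
  then have "x [^] (q ^ j) = x" for j
    unfolding subfield_of_order_def by (induction j) (auto simp: nat_pow_pow[symmetric])
  then show "x \<in> subfield_of_order R q j"
    using x unfolding subfield_of_order_def by simp
qed

lemma subfield_eq_subfield_of_order:
  assumes S: "subfield S R" and KS: "base_field R q \<subseteq> S"
  shows "\<exists>e>0. e dvd n \<and> S = subfield_of_order R q e"
proof -
  define K where "K = base_field R q"
  have K: "subfield K R" and card_K: "card K = q"
    unfolding K_def using subfield_subfield_of_order card_subfield_of_order[of 1] by auto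
  have "subalgebra K S R"
    using subring.axioms(1)[OF subfieldE(1)[OF S]] subringE(6)[OF subfieldE(1)[OF S]] KS
    unfolding K_def by (auto simp: subalgebra_def subalgebra_axioms_def)
  then have card_S: "card S = q ^ dim K S"
    using card_subalgebra(2)[OF finite_carrier K] card_K by simp
  have "card (carrier R) = card S ^ dim S (carrier R)"
    using card_subalgebra(2)[OF finite_carrier S carrier_is_subalgebra[OF subfieldE(3)[OF S]]] .
  then have "q ^ n = q ^ (dim K S * dim S (carrier R))"
    using card_carrier card_S by (simp add: power_mult)
  then have "dim K S dvd n"
    using two_le_q power_inject_exp[of q] by simp
  moreover have "dim K S > 0"
    using card_subfield_ge_2[OF finite_carrier S] card_S by (cases "dim K S") auto
  moreover have "S = subfield_of_order R q (dim K S)"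
    using subfield_eq_pow_card_eq_self[OF S] card_S unfolding subfield_of_order_def by simp
  ultimately show ?thesis
    by blast
qed

lemma subspace_dist_ge:
  assumes m: "m dvd n"
    and U: "is_subspace R (subfield_of_order R q m) U" and V: "is_subspace R (subfield_of_order R q m) V"
    and UV: "U \<noteq> V" "card U = card V"
  shows "2 * m \<le> subspace_dist R q U V"
proof -
  have card_L: "card (subfield_of_order R q m) = card (base_field R q) ^ m"
    using card_subfield_of_order[OF m] card_subfield_of_order[of 1] by simp
  have "dim (base_field R q) (U \<inter> V) + 2 * m \<le> dim (base_field R q) (U <+>\<^bsub>R\<^esub> V)"
    using U V UV subfield_subfield_of_order
    by (intro dim_inter_plus_le_dim_set_add[OF finite_carrier _ _ base_field_subset_subfield_of_order card_L])
      (auto simp: is_subspace_iff_subalgebra)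
  then show ?thesis
    unfolding subspace_dist_def dim_over_eq_dim by simp
qed

lemma best_friend_eq_mult_stabilizer:
  assumes flag: "is_flag R q Fs" and best: "is_best_friend R q n Fs m"
  shows "mult_stabilizer R (set Fs) = subfield_of_order R q m"
proof -
  define S where "S = mult_stabilizer R (set Fs)"
  have K_space: "is_subspace R (base_field R q) U" if "U \<in> set Fs" for U
    using flag that unfolding is_flag_def by (auto simp: in_set_conv_nth)
  have L_space: "is_subspace R (subfield_of_order R q m) U" if "U \<in> set Fs" for U
    using best that unfolding is_best_friend_def is_friend_def by (auto simp: in_set_conv_nth)
  have m: "m > 0" "m dvd n"
    using best unfolding is_best_friend_def is_friend_def by auto
  have "subgroup U (add_monoid R)" "finite U" if "U \<in> set Fs" for U
    using K_space[OF that] subfield_subfield_of_order finite_subset[OF _ finite_carrier]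
    by (auto simp: is_subspace_iff_subalgebra subalgebra_def subalgebra_in_carrier)
  then have S: "subfield S R"
    unfolding S_def by (rule subfield_mult_stabilizer)
  have LS: "subfield_of_order R q m \<subseteq> S"
    using L_space unfolding S_def mult_stabilizer_def is_subspace_def subfield_of_order_def by auto
  then obtain e where e: "e > 0" "e dvd n" "S = subfield_of_order R q e"
    using subfield_eq_subfield_of_order[OF S] base_field_subset_subfield_of_order[of m] by blast
  have "is_subspace R S U" if "U \<in> set Fs" for U
    using K_space[OF that] that unfolding is_subspace_def S_def mult_stabilizer_def by blast
  then have "is_friend R q n Fs e"
    using e unfolding is_friend_def by simp
  then have "e \<le> m"
    using best unfolding is_best_friend_def by blast
  moreover have "q ^ m \<le> q ^ e"
    using card_mono[OF _ LS] e card_subfield_of_order m by (simp add: subfield_of_order_def)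
  then have "m \<le> e"
    using two_le_q by simp
  ultimately show ?thesis
    using e(3) unfolding S_def by simp
qed

lemma flag_dist_orbit_code_ge:
  assumes friend: "is_friend R q n Fs m" and b: "b \<in> carrier R" "b \<noteq> \<zero>"
    and disj: "disjoint_code (length Fs) (orbit_code R b Fs)"
    and FG: "F \<in> orbit_code R b Fs" "G \<in> orbit_code R b Fs" "F \<noteq> G"
  shows "2 * m * length Fs \<le> flag_dist R q F G"
proof -
  define C where "C = orbit_code R b Fs"
  have L_carrier: "subfield_of_order R q m \<subseteq> carrier R"
    unfolding subfield_of_order_def by auto
  obtain i j where F: "F = scale_flag R Fs (b [^] (i::nat))" and G: "G = scale_flag R Fs (b [^] (j::nat))"
    using FG unfolding orbit_code_def by blast
  have "2 * m \<le> subspace_dist R q (F ! k) (G ! k)" if k: "k < length Fs" for k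
  proof -
    have "inj_on (\<lambda>F. F ! k) C"
      using disj k finite_orbit_code unfolding disjoint_code_def C_def by (intro eq_card_imp_inj_on) auto
    then have "F ! k \<noteq> G ! k"
      using FG unfolding C_def inj_on_def by blast
    moreover have space: "is_subspace R (subfield_of_order R q m) (Fs ! k)"
      using friend k unfolding is_friend_def by blast
    moreover have "Fs ! k \<subseteq> carrier R"
      using space unfolding is_subspace_def by blast
    ultimately show ?thesis
      unfolding F G scale_flag_def using b k friend
      by (auto intro!: subspace_dist_ge is_subspace_scale_set[OF L_carrier]
          simp: card_scale_set nat_pow_eq_zero_iff is_friend_def)
  qed
  then have "(\<Sum>k<length Fs. 2 * m) \<le> (\<Sum>k<length Fs. subspace_dist R q (F ! k) (G ! k))"
    by (intro sum_mono) simp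
  also have "\<dots> = flag_dist R q F G"
    unfolding flag_dist_def F scale_flag_def by simp
  finally show ?thesis
    by (simp add: mult.commute)
qed

end

theorem proposition4p20:
  fixes R :: "('a, 'b) ring_scheme" and q n m :: nat and Fs :: "'a set list" and \<beta> :: 'a
  assumes "field R" and "finite (carrier R)"
    and "\<exists>p k. Factorial_Ring.prime (p::nat) \<and> k > 0 \<and> q = p ^ k"
    and "n > 0" and "card (carrier R) = q ^ n"
    and "is_flag R q Fs"
    and "is_best_friend R q n Fs m"
    and "\<beta> \<in> carrier R" and "\<beta> \<noteq> \<zero>\<^bsub>R\<^esub>" and "\<beta> \<notin> subfield_of_order R q m"
    and "disjoint_code (length Fs) (orbit_code R \<beta> Fs)"
  shows "2 * m * length Fs \<le> min_flag_dist R q (orbit_code R \<beta> Fs)"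
proof -
  interpret finite_field_of_order R q n
    using assms(1-3,5)
    by (simp add: finite_field_of_order_def finite_field_of_order_axioms_def finite_field_def
        finite_field_axioms_def)
  have friend: "is_friend R q n Fs m"
    using assms(7) unfolding is_best_friend_def by blast
  have Fs_carrier: "\<forall>U\<in>set Fs. U \<subseteq> carrier R"
    using assms(6) unfolding is_flag_def is_subspace_def by (metis in_set_conv_nth)
  have "\<beta> \<noteq> \<one>\<^bsub>R\<^esub>"
    using assms(10) subringE(3)[OF subfieldE(1)[OF subfield_subfield_of_order]] by auto
  have "scale_flag R Fs \<beta> \<noteq> Fs"
    using mult_stabilizer_if_scale_flag_eq[OF _ assms(8) Fs_carrier] assms(10)
    unfolding best_friend_eq_mult_stabilizer[OF assms(6,7)] by blast
  then show ?thesis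
    using scale_flag_mem_orbit_code[OF assms(8,9) \<open>\<beta> \<noteq> \<one>\<^bsub>R\<^esub>\<close> Fs_carrier]
      flag_dist_orbit_code_ge[OF friend assms(8,9,11)]
    by (intro min_flag_dist_ge[OF finite_orbit_code]) auto
qed

end
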